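(* A stage strategy $s_1^*$ of player 1 is confound-defeating if and only if $\mathrm{supp}(s_1^* )$ is strictly $u_1(\cdot,\alpha_2)$-cyclically monotone for every $(\alpha_0,\alpha_2)\in B_0(s_1^* )$. Moreover, if $u_1$ is strictly cyclically separable, then $s_1^*$ is confound-defeating if and only if $\mathrm{supp}(s_1^* )$ is strictly $u_1$-cyclically monotone.
   Context: Three players $0,1,2$ have finite action sets $A_0,A_1,A_2$; $Y_0,Y_1$ are finite signal sets. Player 0 takes $a_0$, generating a private signal $y_0\sim\rho_0(\cdot\mid a_0)$ for player 1; players 1 and 2 then simultaneously take $a_1,a_2$, generating a public signal $y_1\sim\rho_1(\cdot\mid a_1,a_2)$. Assume: (i) $\rho_0(y_0\mid a_0)>0$ always; (ii) $\rho_1(y_1\mid a_1,a_2)>0$ implies $\rho_1(y_1\mid a_1,a_2')>0$; (iii) for every $a_2$, the vectors $(\rho_1(\cdot\mid a_1,a_2))_{a_1\in A_1}$ are linearly independent. Stage strategies: $\alpha_0\in\Delta(A_0)$, $\alpha_2\in\Delta(A_2)$, $s_1:Y_0\to\Delta(A_1)$; $\|\cdot\|$ is the sup norm. $\gamma(\alpha_0,s_1)[y_0,a_1]=\sum_{a_0}\alpha_0(a_0)\rho_0(y_0\mid a_0)s_1(y_0)[a_1]$ with marginals $\rho(\alpha_0)$ on $Y_0$ and $\phi(\alpha_0,s_1)$ on $A_1$; $p(\alpha_0,s_1,\alpha_2)[y_1]=\sum\alpha_0(a_0)\rho_0(y_0\mid a_0)s_1(y_0)[a_1]\alpha_2(a_2)\rho_1(y_1\mid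 a_1,a_2)$. Payoffs $u_0:A_0\times A_1\to\mathbb{R}$, $u_i:Y_0\times A_1\times A_2\to\mathbb{R}$, extended by expectation; $u_1(y_0,a_1,\alpha_2)=\sum_{a_2}\alpha_2(a_2)u_1(y_0,a_1,a_2)$ and $u_1(\cdot,\alpha_2)$ denotes this as a function on $Y_0\times A_1$. $B(s_1)$: set of $(\alpha_0,\alpha_2)$ with $\mathrm{supp}(\alpha_0)\subset\arg\max_{a_0}u_0(a_0,s_1)$, $\mathrm{supp}(\alpha_2)\subset\arg\max_{a_2}u_2(\alpha_0,s_1,a_2)$. $B_\eta(s_1)$ ($\eta\ge0$): set of $(\alpha_0,\alpha_2)$ such that some $s_1'$ has $(\alpha_0,\alpha_2)\in B(s_1')$ and $\|p(\alpha_0,s_1,\alpha_2)-p(\alpha_0,s_1',\alpha_2)\|\le\eta$. Confound-defeating: $s_1^*$ satisfies at least one of (CD1) for every $\varepsilon>0$ there is $\eta>0$ such that for every $(\alpha_0,\alpha_2)\in B_\eta(s_1^* )$ and every $s_1'$ with $\|s_1'-s_1^*\|>\varepsilon$ and $\|p(\alpha_0,s_1',\alpha_2)-p(\alpha_0,s_1^*,\alpha_2)\|<\eta$ there is $\tilde s_1$ with $p(\alpha_0,\tilde s_1,\alpha_2)=p(\alpha_0,s_1',\alpha_2)$ and $u_1(\alpha_0,\tilde s_1,\alpha_2)>u_1(\alpha_0,s_1',\alpha_2)$; (CD2) for every $(\alpha_0,\alpha_2)\in B_0(s_1^* )$, $\gamma(\alpha_0,s_1^* )$ uniquely maximizes $\sum\gamma(y_0,a_1)u_1(y_0,a_1,\alpha_2)$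 over $\gamma\in\Delta(Y_0\times A_1)$ with marginals $\rho(\alpha_0)$ and $\phi(\alpha_0,s_1^* )$. $\mathrm{supp}(s_1)=\{(y_0,a_1):a_1\in\mathrm{supp}(s_1(y_0))\}$. For $u:Y_0\times A_1\to\mathbb{R}$, $S\subset Y_0\times A_1$ is strictly $u$-cyclically monotone if for every finite collection $\{(x_i,y_i)\}_{i=1}^N\subset S$ with $\{(x_i,y_i)\}_{i=1}^N\neq\{(x_i,y_{i+1})\}_{i=1}^N$ (where $y_{N+1}=y_1$), $\sum_iu(x_i,y_i)>\sum_iu(x_i,y_{i+1})$. $u_1$ is strictly cyclically separable if whenever $S$ is strictly $u_1(\cdot,\alpha_2)$-cyclically monotone for some $\alpha_2\in\Delta(A_2)$, it is so for all $\alpha_2\in\Delta(A_2)$; in that case $S$ is called strictly $u_1$-cyclically monotone. *)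

theory Defs
  imports Complex_Main
begin

(* Conventions:
   rho0 a0 y0   = rho_0(y0 | a0)
   rho1 a1 a2 y1 = rho_1(y1 | a1, a2)
   s1 y0 a1     = s_1(y0)[a1]
   Distributions over a finite type are functions into real. *)

definition is_dist :: "('a::finite \<Rightarrow> real) \<Rightarrow> bool" where
  "is_dist \<alpha> \<longleftrightarrow> (\<forall>x. 0 \<le> \<alpha> x) \<and> (\<Sum>x\<in>UNIV. \<alpha> x) = 1"

definition is_strat :: "('y::finite \<Rightarrow> 'a::finite \<Rightarrow> real) \<Rightarrow> bool" where
  "is_strat s \<longleftrightarrow> (\<forall>y. is_dist (s y))"

definition supn :: "('a::finite \<Rightarrow> real) \<Rightarrow> real" where
  "supn f = Max (range (\<lambda>x. \<bar>f x\<bar>))"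

definition supn2 :: "('y::finite \<Rightarrow> 'a::finite \<Rightarrow> real) \<Rightarrow> real" where
  "supn2 s = Max (range (\<lambda>(y, a). \<bar>s y a\<bar>))"

definition gam :: "('a0::finite \<Rightarrow> 'y0::finite \<Rightarrow> real) \<Rightarrow> ('a0 \<Rightarrow> real)
    \<Rightarrow> ('y0 \<Rightarrow> 'a1::finite \<Rightarrow> real) \<Rightarrow> 'y0 \<Rightarrow> 'a1 \<Rightarrow> real" where
  "gam rho0 \<alpha>0 s y0 a1 = (\<Sum>a0\<in>UNIV. \<alpha>0 a0 * rho0 a0 y0 * s y0 a1)"

definition rho_marg :: "('a0::finite \<Rightarrow> 'y0::finite \<Rightarrow> real) \<Rightarrow> ('a0 \<Rightarrow> real) \<Rightarrow> 'y0 \<Rightarrow> real" where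
  "rho_marg rho0 \<alpha>0 y0 = (\<Sum>a0\<in>UNIV. \<alpha>0 a0 * rho0 a0 y0)"

definition phi :: "('a0::finite \<Rightarrow> 'y0::finite \<Rightarrow> real) \<Rightarrow> ('a0 \<Rightarrow> real)
    \<Rightarrow> ('y0 \<Rightarrow> 'a1::finite \<Rightarrow> real) \<Rightarrow> 'a1 \<Rightarrow> real" where
  "phi rho0 \<alpha>0 s a1 = (\<Sum>y0\<in>UNIV. gam rho0 \<alpha>0 s y0 a1)"

definition pdist :: "('a0::finite \<Rightarrow> 'y0::finite \<Rightarrow> real) \<Rightarrow> ('a1::finite \<Rightarrow> 'a2::finite \<Rightarrow> 'y1 \<Rightarrow> real)
    \<Rightarrow> ('a0 \<Rightarrow> real) \<Rightarrow> ('y0 \<Rightarrow> 'a1 \<Rightarrow> real) \<Rightarrow> ('a2 \<Rightarrow> real) \<Rightarrow> 'y1 \<Rightarrow> real" where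
  "pdist rho0 rho1 \<alpha>0 s \<alpha>2 y1 =
     (\<Sum>y0\<in>UNIV. \<Sum>a1\<in>UNIV. \<Sum>a2\<in>UNIV. gam rho0 \<alpha>0 s y0 a1 * \<alpha>2 a2 * rho1 a1 a2 y1)"

definition U0 :: "('a0::finite \<Rightarrow> 'y0::finite \<Rightarrow> real) \<Rightarrow> ('a0 \<Rightarrow> 'a1::finite \<Rightarrow> real)
    \<Rightarrow> 'a0 \<Rightarrow> ('y0 \<Rightarrow> 'a1 \<Rightarrow> real) \<Rightarrow> real" where
  "U0 rho0 u0 a0 s = (\<Sum>y0\<in>UNIV. \<Sum>a1\<in>UNIV. rho0 a0 y0 * s y0 a1 * u0 a0 a1)"

definition Ui :: "('a0::finite \<Rightarrow> 'y0::finite \<Rightarrow> real) \<Rightarrow> ('y0 \<Rightarrow> 'a1::finite \<Rightarrow> 'a2::finite \<Rightarrow> real)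
    \<Rightarrow> ('a0 \<Rightarrow> real) \<Rightarrow> ('y0 \<Rightarrow> 'a1 \<Rightarrow> real) \<Rightarrow> ('a2 \<Rightarrow> real) \<Rightarrow> real" where
  "Ui rho0 u \<alpha>0 s \<alpha>2 =
     (\<Sum>y0\<in>UNIV. \<Sum>a1\<in>UNIV. \<Sum>a2\<in>UNIV. gam rho0 \<alpha>0 s y0 a1 * \<alpha>2 a2 * u y0 a1 a2)"

definition umix :: "('y0 \<Rightarrow> 'a1 \<Rightarrow> 'a2::finite \<Rightarrow> real) \<Rightarrow> ('a2 \<Rightarrow> real) \<Rightarrow> 'y0 \<Rightarrow> 'a1 \<Rightarrow> real" where
  "umix u \<alpha>2 y0 a1 = (\<Sum>a2\<in>UNIV. \<alpha>2 a2 * u y0 a1 a2)"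

text \<open>Best responses B(s1): u2(alpha0,s1,a2) is Ui with the point mass at a2.\<close>
definition BR :: "('a0::finite \<Rightarrow> 'y0::finite \<Rightarrow> real) \<Rightarrow> ('a0 \<Rightarrow> 'a1::finite \<Rightarrow> real)
    \<Rightarrow> ('y0 \<Rightarrow> 'a1 \<Rightarrow> 'a2::finite \<Rightarrow> real) \<Rightarrow> ('y0 \<Rightarrow> 'a1 \<Rightarrow> real)
    \<Rightarrow> (('a0 \<Rightarrow> real) \<times> ('a2 \<Rightarrow> real)) set" where
  "BR rho0 u0 u2 s = {(\<alpha>0, \<alpha>2). is_dist \<alpha>0 \<and> is_dist \<alpha>2 \<and>
      (\<forall>a0. \<alpha>0 a0 \<noteq> 0 \<longrightarrow> (\<forall>b. U0 rho0 u0 b s \<le> U0 rho0 u0 a0 s)) \<and>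
      (\<forall>a2. \<alpha>2 a2 \<noteq> 0 \<longrightarrow> (\<forall>b. Ui rho0 u2 \<alpha>0 s (\<lambda>x. if x = b then 1 else 0)
                                   \<le> Ui rho0 u2 \<alpha>0 s (\<lambda>x. if x = a2 then 1 else 0)))}"

definition BReta :: "('a0::finite \<Rightarrow> 'y0::finite \<Rightarrow> real) \<Rightarrow> ('a1::finite \<Rightarrow> 'a2::finite \<Rightarrow> 'y1::finite \<Rightarrow> real)
    \<Rightarrow> ('a0 \<Rightarrow> 'a1 \<Rightarrow> real) \<Rightarrow> ('y0 \<Rightarrow> 'a1 \<Rightarrow> 'a2 \<Rightarrow> real) \<Rightarrow> real \<Rightarrow> ('y0 \<Rightarrow> 'a1 \<Rightarrow> real)
    \<Rightarrow> (('a0 \<Rightarrow> real) \<times> ('a2 \<Rightarrow> real)) set" where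
  "BReta rho0 rho1 u0 u2 \<eta> s = {(\<alpha>0, \<alpha>2). \<exists>s'. is_strat s' \<and> (\<alpha>0, \<alpha>2) \<in> BR rho0 u0 u2 s' \<and>
      supn (\<lambda>y1. pdist rho0 rho1 \<alpha>0 s \<alpha>2 y1 - pdist rho0 rho1 \<alpha>0 s' \<alpha>2 y1) \<le> \<eta>}"

definition CD1 :: "('a0::finite \<Rightarrow> 'y0::finite \<Rightarrow> real) \<Rightarrow> ('a1::finite \<Rightarrow> 'a2::finite \<Rightarrow> 'y1::finite \<Rightarrow> real)
    \<Rightarrow> ('a0 \<Rightarrow> 'a1 \<Rightarrow> real) \<Rightarrow> ('y0 \<Rightarrow> 'a1 \<Rightarrow> 'a2 \<Rightarrow> real) \<Rightarrow> ('y0 \<Rightarrow> 'a1 \<Rightarrow> 'a2 \<Rightarrow> real)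
    \<Rightarrow> ('y0 \<Rightarrow> 'a1 \<Rightarrow> real) \<Rightarrow> bool" where
  "CD1 rho0 rho1 u0 u1 u2 s = (\<forall>\<epsilon>>0. \<exists>\<eta>>0. \<forall>(\<alpha>0, \<alpha>2) \<in> BReta rho0 rho1 u0 u2 \<eta> s. \<forall>s'.
      is_strat s' \<and> supn2 (\<lambda>y a. s' y a - s y a) > \<epsilon> \<and>
      supn (\<lambda>y1. pdist rho0 rho1 \<alpha>0 s' \<alpha>2 y1 - pdist rho0 rho1 \<alpha>0 s \<alpha>2 y1) < \<eta> \<longrightarrow>
      (\<exists>st. is_strat st \<and> pdist rho0 rho1 \<alpha>0 st \<alpha>2 = pdist rho0 rho1 \<alpha>0 s' \<alpha>2 \<and>
            Ui rho0 u1 \<alpha>0 st \<alpha>2 > Ui rho0 u1 \<alpha>0 s' \<alpha>2))"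

definition coupling :: "('y0::finite \<Rightarrow> real) \<Rightarrow> ('a1::finite \<Rightarrow> real) \<Rightarrow> ('y0 \<Rightarrow> 'a1 \<Rightarrow> real) \<Rightarrow> bool" where
  "coupling m1 m2 g \<longleftrightarrow> (\<forall>y a. 0 \<le> g y a) \<and> (\<Sum>y\<in>UNIV. \<Sum>a\<in>UNIV. g y a) = 1 \<and>
     (\<forall>y. (\<Sum>a\<in>UNIV. g y a) = m1 y) \<and> (\<forall>a. (\<Sum>y\<in>UNIV. g y a) = m2 a)"

definition CD2 :: "('a0::finite \<Rightarrow> 'y0::finite \<Rightarrow> real) \<Rightarrow> ('a1::finite \<Rightarrow> 'a2::finite \<Rightarrow> 'y1::finite \<Rightarrow> real)
    \<Rightarrow> ('a0 \<Rightarrow> 'a1 \<Rightarrow> real) \<Rightarrow> ('y0 \<Rightarrow> 'a1 \<Rightarrow> 'a2 \<Rightarrow> real) \<Rightarrow> ('y0 \<Rightarrow> 'a1 \<Rightarrow> 'a2 \<Rightarrow> real)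
    \<Rightarrow> ('y0 \<Rightarrow> 'a1 \<Rightarrow> real) \<Rightarrow> bool" where
  "CD2 rho0 rho1 u0 u1 u2 s = (\<forall>(\<alpha>0, \<alpha>2) \<in> BReta rho0 rho1 u0 u2 0 s.
      let m1 = rho_marg rho0 \<alpha>0; m2 = phi rho0 \<alpha>0 s; gs = gam rho0 \<alpha>0 s;
          val = (\<lambda>g. \<Sum>y\<in>UNIV. \<Sum>a\<in>UNIV. g y a * umix u1 \<alpha>2 y a) in
      coupling m1 m2 gs \<and> (\<forall>g. coupling m1 m2 g \<and> g \<noteq> gs \<longrightarrow> val g < val gs))"

definition confound_defeating where
  "confound_defeating rho0 rho1 u0 u1 u2 s \<longleftrightarrow>
     CD1 rho0 rho1 u0 u1 u2 s \<or> CD2 rho0 rho1 u0 u1 u2 s"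

definition supp1 :: "('y \<Rightarrow> 'a \<Rightarrow> real) \<Rightarrow> ('y \<times> 'a) set" where
  "supp1 s = {(y, a). s y a \<noteq> 0}"

text \<open>Strict cyclic monotonicity; a finite collection is a nonempty list
  (x_1,y_1),...,(x_N,y_N), compared as a set with its cyclic shift.\<close>
definition shift_pairs :: "('x \<times> 'y) list \<Rightarrow> ('x \<times> 'y) list" where
  "shift_pairs xs = map (\<lambda>i. (fst (xs ! i), snd (xs ! (Suc i mod length xs)))) [0..<length xs]"

definition strictly_cm :: "('x \<times> 'y) set \<Rightarrow> ('x \<Rightarrow> 'y \<Rightarrow> real) \<Rightarrow> bool" where
  "strictly_cm S u \<longleftrightarrow> (\<forall>xs. xs \<noteq> [] \<and> set xs \<subseteq> S \<and> set xs \<noteq> set (shift_pairs xs) \<longrightarrow>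
      (\<Sum>p\<leftarrow>xs. u (fst p) (snd p)) > (\<Sum>p\<leftarrow>shift_pairs xs. u (fst p) (snd p)))"

definition strictly_cyc_separable :: "('y0 \<Rightarrow> 'a1 \<Rightarrow> 'a2::finite \<Rightarrow> real) \<Rightarrow> bool" where
  "strictly_cyc_separable u1 \<longleftrightarrow> (\<forall>S. (\<exists>\<alpha>2. is_dist \<alpha>2 \<and> strictly_cm S (umix u1 \<alpha>2)) \<longrightarrow>
      (\<forall>\<alpha>2. is_dist \<alpha>2 \<longrightarrow> strictly_cm S (umix u1 \<alpha>2)))"

definition strictly_u1_cm :: "('y0 \<Rightarrow> 'a1 \<Rightarrow> 'a2::finite \<Rightarrow> real) \<Rightarrow> ('y0 \<times> 'a1) set \<Rightarrow> bool" where
  "strictly_u1_cm u1 S \<longleftrightarrow> (\<exists>\<alpha>2. is_dist \<alpha>2 \<and> strictly_cm S (umix u1 \<alpha>2))"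

end

theory Submission
  imports Defs "HOL-Analysis.Cartesian_Euclidean_Space"
begin

(* Since every signal has positive probability, strategies s1 correspond
   exactly to couplings gamma(alpha0, s1) of rho(alpha0) with an action marginal, the support of
   the coupling is supp(s1), and player 1's payoff is linear in it.  CD2 asks that this coupling
   be the unique optimum among couplings with its marginals.  Another coupling differs from it by
   a plan with zero marginals whose negative part lies in supp(s1); such a plan is a positive
   combination of cycle plans, so strict cyclic monotonicity makes it strictly unprofitable.
   Conversely, a weakly profitable cycle in the support lets one shift a little mass along it.
   CD1 implies CD2: by compactness the payoff attains its maximum over the strategies inducing
   the same public signal distribution, CD1 rules out every maximizer other than s1, and the
   public signal distribution depends on s1 only through its action marginal.  For the separable
   case note that B_0(s1) always contains a pair of pure best responses. *)

definition pairing :: "('y::finite \<Rightarrow> 'a::finite \<Rightarrow> real) \<Rightarrow> ('y \<Rightarrow> 'a \<Rightarrow> real) \<Rightarrow> real" where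
  "pairing g f = (\<Sum>y\<in>UNIV. \<Sum>a\<in>UNIV. g y a * f y a)"

definition zero_marginals :: "('y::finite \<Rightarrow> 'a::finite \<Rightarrow> real) \<Rightarrow> bool" where
  "zero_marginals d \<longleftrightarrow> (\<forall>y. (\<Sum>a\<in>UNIV. d y a) = 0) \<and> (\<forall>a. (\<Sum>y\<in>UNIV. d y a) = 0)"

definition cycle_plan :: "('y \<times> 'a) list \<Rightarrow> 'y \<Rightarrow> 'a \<Rightarrow> real" where
  "cycle_plan xs y a = real (count_list xs (y, a)) - real (count_list (shift_pairs xs) (y, a))"

lemma pairing_diff_left: "pairing (\<lambda>y a. g y a - h y a) f = pairing g f - pairing h f"
  by (simp add: pairing_def left_diff_distrib sum_subtractf)

lemma pairing_add_scaled_left: "pairing (\<lambda>y a. g y a + c * h y a) f = pairing g f + c * pairing h f"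
  by (simp add: pairing_def distrib_right sum.distrib sum_distrib_left mult.assoc)

lemma zero_marginals_add_scaled:
  "zero_marginals d \<Longrightarrow> zero_marginals e \<Longrightarrow> zero_marginals (\<lambda>y a. d y a + c * e y a)"
  by (simp add: zero_marginals_def sum.distrib flip: sum_distrib_left)

lemma length_shift_pairs [simp]: "length (shift_pairs xs) = length xs"
  by (simp add: shift_pairs_def)

lemma nth_shift_pairs:
  "i < length xs \<Longrightarrow> shift_pairs xs ! i = (fst (xs ! i), snd (xs ! (Suc i mod length xs)))"
  by (simp add: shift_pairs_def)

lemma map_fst_shift_pairs: "map fst (shift_pairs xs) = map fst xs"
  by (rule nth_equalityI) (auto simp: nth_shift_pairs)

lemma map_snd_shift_pairs: "map snd (shift_pairs xs) = rotate1 (map snd xs)"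
  by (rule nth_equalityI)
    (auto simp: nth_shift_pairs nth_rotate1 intro!: nth_map[symmetric] mod_less_divisor)

lemma sum_list_eq_sum_count_list:
  fixes g :: "'b::finite \<Rightarrow> real"
  shows "(\<Sum>q\<leftarrow>L. g q) = (\<Sum>q\<in>UNIV. real (count_list L q) * g q)"
proof (induction L)
  case (Cons x L)
  have "real (count_list (x # L) q) * g q = real (count_list L q) * g q + (if q = x then g q else 0)" for q
    by (simp add: distrib_right)
  then show ?case
    by (simp add: Cons.IH sum.distrib)
qed simp

lemma sum_list_count_pairs:
  fixes f :: "'y::finite \<Rightarrow> 'a::finite \<Rightarrow> real"
  shows "(\<Sum>q\<leftarrow>L. f (fst q) (snd q)) = (\<Sum>y\<in>UNIV. \<Sum>a\<in>UNIV. real (count_list L (y, a)) * f y a)"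
  unfolding sum_list_eq_sum_count_list
  by (simp only: sum.cartesian_product UNIV_Times_UNIV) (simp add: case_prod_beta)

lemma pairing_cycle_plan:
  "pairing (cycle_plan xs) f = (\<Sum>q\<leftarrow>xs. f (fst q) (snd q)) - (\<Sum>q\<leftarrow>shift_pairs xs. f (fst q) (snd q))"
  by (simp add: pairing_def cycle_plan_def sum_list_count_pairs left_diff_distrib sum_subtractf)

lemma pairing_row_indicator: "pairing g (\<lambda>y' a. if y' = y then 1 else 0) = (\<Sum>a\<in>UNIV. g y a)"
proof -
  have "pairing g (\<lambda>y' a. if y' = y then 1 else 0) = (\<Sum>y'\<in>UNIV. if y' = y then (\<Sum>a\<in>UNIV. g y' a) else 0)"
    unfolding pairing_def by (intro sum.cong) auto
  then show ?thesis by simp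
qed

lemma pairing_column_indicator: "pairing g (\<lambda>y a'. if a' = a then 1 else 0) = (\<Sum>y\<in>UNIV. g y a)"
  unfolding pairing_def by (simp add: if_distrib cong: if_cong)

lemma sum_list_shift_pairs_fst: "(\<Sum>q\<leftarrow>shift_pairs xs. h (fst q)) = (\<Sum>q\<leftarrow>xs. h (fst q))"
  using arg_cong[OF map_fst_shift_pairs, of "\<lambda>l. sum_list (map h l)"] by (simp add: comp_def)

lemma sum_list_shift_pairs_snd:
  fixes h :: "'a \<Rightarrow> 'b::comm_monoid_add"
  shows "(\<Sum>q\<leftarrow>shift_pairs xs. h (snd q)) = (\<Sum>q\<leftarrow>xs. h (snd q))"
proof -
  have sum_list_rotate1: "sum_list (rotate1 l) = sum_list l" for l :: "'b list"
    by (cases l) (simp_all add: add.commute)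
  have "(\<Sum>q\<leftarrow>shift_pairs xs. h (snd q)) = sum_list (map h (map snd (shift_pairs xs)))"
    by (simp add: comp_def)
  also have "\<dots> = sum_list (map h (rotate1 (map snd xs)))"
    by (simp only: map_snd_shift_pairs)
  also have "\<dots> = sum_list (map h (map snd xs))"
    by (simp only: rotate1_map[symmetric] sum_list_rotate1)
  finally show ?thesis by (simp add: comp_def)
qed

lemma zero_marginals_cycle_plan: "zero_marginals (cycle_plan xs)"
  unfolding zero_marginals_def pairing_row_indicator[symmetric] pairing_column_indicator[symmetric]
    pairing_cycle_plan
  using sum_list_shift_pairs_fst[of "\<lambda>x. if x = y then 1 else (0::real)" xs for y]
    sum_list_shift_pairs_snd[of "\<lambda>x. if x = a then 1 else (0::real)" xs for a]
  by simp

lemma cycle_plan_pos: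
  "(y, a) \<in> set xs \<Longrightarrow> (y, a) \<notin> set (shift_pairs xs) \<Longrightarrow> 0 < cycle_plan xs y a"
  using count_list_0_iff[of xs "(y, a)"] by (simp add: cycle_plan_def)

lemma cycle_plan_neg:
  "(y, a) \<notin> set xs \<Longrightarrow> (y, a) \<in> set (shift_pairs xs) \<Longrightarrow> cycle_plan xs y a < 0"
  using count_list_0_iff[of "shift_pairs xs" "(y, a)"] by (simp add: cycle_plan_def)

lemma cycle_plan_zero:
  "(y, a) \<notin> set xs \<Longrightarrow> (y, a) \<notin> set (shift_pairs xs) \<Longrightarrow> cycle_plan xs y a = 0"
  by (simp add: cycle_plan_def)

lemma cycle_plan_pos_imp_mem: "0 < cycle_plan xs y a \<Longrightarrow> (y, a) \<in> set xs"
  by (cases "(y, a) \<in> set xs") (simp_all add: cycle_plan_def)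

lemma cycle_plan_le_length: "cycle_plan xs y a \<le> real (length xs)"
  using count_le_length[of xs "(y, a)"] by (simp add: cycle_plan_def)

lemma supp1_cycle_plan_nonempty:
  assumes "set xs \<noteq> set (shift_pairs xs)"
  shows "supp1 (cycle_plan xs) \<noteq> {}"
proof -
  obtain p where "p \<in> set xs \<and> p \<notin> set (shift_pairs xs) \<or> p \<notin> set xs \<and> p \<in> set (shift_pairs xs)"
    using assms by blast
  then have "cycle_plan xs (fst p) (snd p) \<noteq> 0"
    using cycle_plan_pos[of "fst p" "snd p"] cycle_plan_neg[of "fst p" "snd p"] by force
  then show ?thesis
    by (auto simp: supp1_def)
qed

lemma funpow_eventually_periodic:
  fixes f :: "'b::finite \<Rightarrow> 'b"
  obtains i m where "0 < m" "(f ^^ m) ((f ^^ i) x) = (f ^^ i) x"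
proof -
  have "\<not> inj (\<lambda>k. (f ^^ k) x)"
    using finite_imageD[of "\<lambda>k. (f ^^ k) x" UNIV] by auto
  then obtain i j where "i < j" "(f ^^ i) x = (f ^^ j) x"
    unfolding inj_def by (metis linorder_neqE_nat)
  moreover have "(f ^^ (j - i)) ((f ^^ i) x) = (f ^^ j) x"
    using \<open>i < j\<close> by (metis funpow_add comp_apply le_add_diff_inverse2 less_imp_le)
  ultimately show thesis
    using that[of "j - i" i] by simp
qed

lemma shift_pairs_orbit:
  assumes "(f ^^ m) q = q"
  shows "shift_pairs (map (\<lambda>k. (f ^^ k) q) [0..<m])
    = map (\<lambda>k. (fst ((f ^^ k) q), snd ((f ^^ Suc k) q))) [0..<m]"
  by (rule nth_equalityI) (simp_all add: nth_shift_pairs funpow_mod_eq[OF assms])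

lemma sum_zero_pos_imp_neg:
  fixes g :: "'b::finite \<Rightarrow> real"
  assumes "sum g UNIV = 0" "0 < g x"
  shows "\<exists>z. g z < 0"
  using sum_nonneg_eq_0_iff[of UNIV g] assms by (force simp: not_less)

lemma zero_marginals_negative_cycle:
  fixes d :: "'y::finite \<Rightarrow> 'a::finite \<Rightarrow> real"
  assumes d: "zero_marginals d" and nonzero: "supp1 d \<noteq> {}"
  obtains xs where "xs \<noteq> []" "\<forall>(y, a) \<in> set xs. d y a < 0"
    "\<forall>(y, a) \<in> set (shift_pairs xs). 0 < d y a"
proof -
  define N where "N = {(y, a). d y a < 0}"
  have column_neg: "\<exists>z. (z, a) \<in> N" if "0 < d y a" for y a
    using d that sum_zero_pos_imp_neg[of "\<lambda>z. d z a" y] by (auto simp: zero_marginals_def N_def)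
  have row_pos: "\<exists>a'. 0 < d y a'" if "d y a < 0" for y a
    using d that sum_zero_pos_imp_neg[of "\<lambda>a. - d y a" a] by (auto simp: zero_marginals_def sum_negf)
  have "\<forall>q \<in> N. \<exists>q' \<in> N. 0 < d (fst q) (snd q')"
    using row_pos column_neg by (fastforce simp: N_def)
  then obtain f where f: "\<And>q. q \<in> N \<Longrightarrow> f q \<in> N \<and> 0 < d (fst q) (snd (f q))"
    by metis
  obtain p where "p \<in> N"
    using nonzero column_neg by (fastforce simp: supp1_def N_def neq_iff)
  then have orbit: "(f ^^ k) p \<in> N" for k
    by (induction k) (simp_all add: f)
  obtain i m where "0 < m" and period: "(f ^^ m) ((f ^^ i) p) = (f ^^ i) p"
    using funpow_eventually_periodic .
  define xs where "xs = map (\<lambda>k. (f ^^ k) ((f ^^ i) p)) [0..<m]"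
  have "(f ^^ k) ((f ^^ i) p) \<in> N" for k
    using orbit[of "k + i"] by (simp add: funpow_add)
  then have xs_in_N: "set xs \<subseteq> N"
    by (auto simp: xs_def)
  have "set (shift_pairs xs) = (\<lambda>r. (fst r, snd (f r))) ` set xs"
    unfolding xs_def shift_pairs_orbit[OF period] by auto
  then have "\<forall>(y, a) \<in> set (shift_pairs xs). 0 < d y a"
    using xs_in_N f by auto
  moreover have "\<forall>(y, a) \<in> set xs. d y a < 0"
    using xs_in_N by (auto simp: N_def)
  moreover have "xs \<noteq> []"
    using \<open>0 < m\<close> by (simp add: xs_def)
  ultimately show thesis
    using that by blast
qed

lemma exists_cancelling_multiple:
  fixes d e :: "'y::finite \<Rightarrow> 'a::finite \<Rightarrow> real"
  assumes "supp1 e \<noteq> {}" and opposite: "\<forall>y a. e y a \<noteq> 0 \<longrightarrow> d y a * e y a < 0"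
  obtains c where "0 < c" "\<forall>y a. d y a + c * e y a < 0 \<longrightarrow> d y a < 0"
    "supp1 (\<lambda>y a. d y a + c * e y a) \<subset> supp1 d"
proof -
  define r where "r = (\<lambda>(y, a). - d y a / e y a)"
  define c where "c = Min (r ` supp1 e)"
  have r_pos: "0 < r p" if "p \<in> supp1 e" for p
    using that opposite by (auto simp: r_def supp1_def divide_less_0_iff mult_less_0_iff)
  have c_le: "c \<le> - d y a / e y a" if "e y a \<noteq> 0" for y a
  proof -
    have "c \<le> r (y, a)"
      unfolding c_def using that by (intro Min_le) (auto simp: supp1_def)
    then show ?thesis
      by (simp add: r_def)
  qed
  have "c \<in> r ` supp1 e"
    unfolding c_def using \<open>supp1 e \<noteq> {}\<close> by (intro Min_in) auto
  then obtain y0 a0 where p0: "(y0, a0) \<in> supp1 e" "r (y0, a0) = c"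
    by auto
  then have "0 < c"
    using r_pos by auto
  have "e y0 a0 \<noteq> 0"
    using p0(1) by (simp add: supp1_def)
  then have "(y0, a0) \<in> supp1 d - supp1 (\<lambda>y a. d y a + c * e y a)"
    using p0(2) opposite by (force simp: supp1_def r_def)
  moreover have "supp1 (\<lambda>y a. d y a + c * e y a) \<subseteq> supp1 d"
    using opposite by (force simp: supp1_def)
  moreover have "d y a + c * e y a < 0 \<longrightarrow> d y a < 0" for y a
  proof (cases "e y a = 0")
    case False
    then have "d y a * e y a < 0"
      using opposite by blast
    then consider "0 < d y a" "e y a < 0" | "d y a < 0"
      by (auto simp: mult_less_0_iff)
    then show ?thesis
    proof cases
      case 1
      then have "- d y a \<le> c * e y a"
        using c_le[OF False] neg_le_divide_eq[of "e y a" c "- d y a"] by blast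
      then show ?thesis
        by simp
    qed simp
  qed simp
  ultimately show thesis
    using that \<open>0 < c\<close> by blast
qed

lemma cycle_plan_opposite_sign:
  assumes "\<forall>(y, a) \<in> set xs. d y a < 0" and "\<forall>(y, a) \<in> set (shift_pairs xs). 0 < d y a"
  shows "\<forall>y a. cycle_plan xs y a \<noteq> 0 \<longrightarrow> d y a * cycle_plan xs y a < 0"
proof (intro allI impI)
  fix y a
  assume "cycle_plan xs y a \<noteq> 0"
  then consider "(y, a) \<in> set xs" | "(y, a) \<in> set (shift_pairs xs)"
    using cycle_plan_zero[of y a xs] by blast
  then show "d y a * cycle_plan xs y a < 0"
    using assms cycle_plan_pos[of y a xs] cycle_plan_neg[of y a xs]
    by cases (fastforce simp: mult_less_0_iff)+
qed

lemma pairing_neg_if_strictly_cm: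
  fixes d u :: "'y::finite \<Rightarrow> 'a::finite \<Rightarrow> real"
  assumes cm: "strictly_cm S u" and "zero_marginals d" and "\<forall>y a. d y a < 0 \<longrightarrow> (y, a) \<in> S"
    and "supp1 d \<noteq> {}"
  shows "pairing d u < 0"
  using assms(2-)
proof (induction "card (supp1 d)" arbitrary: d rule: less_induct)
  case less
  obtain xs where "xs \<noteq> []" and neg: "\<forall>(y, a) \<in> set xs. d y a < 0"
    and pos: "\<forall>(y, a) \<in> set (shift_pairs xs). 0 < d y a"
    using zero_marginals_negative_cycle[OF less.prems(1,3)] .
  have "set xs \<inter> set (shift_pairs xs) = {}"
    using neg pos by fastforce
  then have "set xs \<noteq> set (shift_pairs xs)"
    using \<open>xs \<noteq> []\<close> by auto
  moreover have "set xs \<subseteq> S"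
    using neg less.prems(2) by auto
  ultimately have gain: "0 < pairing (cycle_plan xs) u"
    using cm \<open>xs \<noteq> []\<close> by (simp add: strictly_cm_def pairing_cycle_plan)
  obtain c where "0 < c" and neg_kept: "\<forall>y a. d y a + c * cycle_plan xs y a < 0 \<longrightarrow> d y a < 0"
    and smaller: "supp1 (\<lambda>y a. d y a + c * cycle_plan xs y a) \<subset> supp1 d"
    using exists_cancelling_multiple[OF supp1_cycle_plan_nonempty cycle_plan_opposite_sign[OF neg pos]]
      \<open>set xs \<noteq> set (shift_pairs xs)\<close> by blast
  define d' where "d' = (\<lambda>y a. d y a + c * cycle_plan xs y a)"
  have "pairing d' u \<le> 0"
  proof (cases "supp1 d' = {}")
    case True
    then show ?thesis
      by (simp add: pairing_def supp1_def)
  next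
    case False
    have "card (supp1 d') < card (supp1 d)"
      using psubset_card_mono[OF _ smaller] by (simp add: d'_def)
    moreover have "zero_marginals d'"
      unfolding d'_def using less.prems(1) zero_marginals_cycle_plan by (rule zero_marginals_add_scaled)
    moreover have "\<forall>y a. d' y a < 0 \<longrightarrow> (y, a) \<in> S"
      using neg_kept less.prems(2) by (simp add: d'_def)
    ultimately show ?thesis
      using less.hyps False by (simp add: less_imp_le)
  qed
  moreover have "pairing d u = pairing d' u - c * pairing (cycle_plan xs) u"
    by (simp add: d'_def pairing_add_scaled_left)
  ultimately show ?case
    using mult_pos_pos[OF \<open>0 < c\<close> gain] by linarith
qed

lemma zero_marginals_diff_couplings:
  "coupling m1 m2 g \<Longrightarrow> coupling m1 m2 g' \<Longrightarrow> zero_marginals (\<lambda>y a. g y a - g' y a)"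
  by (simp add: coupling_def zero_marginals_def sum_subtractf)

lemma coupling_add_zero_marginals:
  assumes "coupling m1 m2 g" and e: "zero_marginals e" and "\<forall>y a. 0 \<le> g y a + c * e y a"
  shows "coupling m1 m2 (\<lambda>y a. g y a + c * e y a)"
proof -
  have rows: "(\<Sum>a\<in>UNIV. g y a + c * e y a) = (\<Sum>a\<in>UNIV. g y a)" for y
    using e by (simp add: zero_marginals_def sum.distrib flip: sum_distrib_left)
  have cols: "(\<Sum>y\<in>UNIV. g y a + c * e y a) = (\<Sum>y\<in>UNIV. g y a)" for a
    using e by (simp add: zero_marginals_def sum.distrib flip: sum_distrib_left)
  show ?thesis
    using assms(1,3) unfolding coupling_def rows cols by blast
qed

lemma coupling_minus_cycle_plan:
  fixes g :: "'y::finite \<Rightarrow> 'a::finite \<Rightarrow> real"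
  assumes g: "coupling m1 m2 g" and "xs \<noteq> []" "set xs \<subseteq> supp1 g"
  obtains \<tau> where "0 < \<tau>" "coupling m1 m2 (\<lambda>y a. g y a - \<tau> * cycle_plan xs y a)"
proof -
  define \<tau> where "\<tau> = Min ((\<lambda>(y, a). g y a) ` set xs) / real (length xs)"
  have "0 < g y a" if "(y, a) \<in> set xs" for y a
  proof -
    have "g y a \<noteq> 0"
      using that \<open>set xs \<subseteq> supp1 g\<close> by (auto simp: supp1_def)
    moreover have "0 \<le> g y a"
      using g by (simp add: coupling_def)
    ultimately show ?thesis
      by simp
  qed
  then have "0 < Min ((\<lambda>(y, a). g y a) ` set xs)"
    using \<open>xs \<noteq> []\<close> by (auto simp: Min_gr_iff)
  then have "0 < \<tau>"
    using \<open>xs \<noteq> []\<close> by (simp add: \<tau>_def)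
  have "\<tau> * cycle_plan xs y a \<le> g y a" for y a
  proof (cases "0 < cycle_plan xs y a")
    case True
    then have "(y, a) \<in> set xs"
      by (rule cycle_plan_pos_imp_mem)
    have "\<tau> * cycle_plan xs y a \<le> \<tau> * real (length xs)"
      using \<open>0 < \<tau>\<close> cycle_plan_le_length by (simp add: mult_left_mono)
    also have "\<dots> = Min ((\<lambda>(y, a). g y a) ` set xs)"
      using \<open>xs \<noteq> []\<close> by (simp add: \<tau>_def)
    also have "\<dots> \<le> g y a"
      using \<open>(y, a) \<in> set xs\<close> by (force intro: Min_le)
    finally show ?thesis .
  next
    case False
    then have "\<tau> * cycle_plan xs y a \<le> 0"
      using \<open>0 < \<tau>\<close> by (simp add: mult_nonneg_nonpos)
    moreover have "0 \<le> g y a"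
      using g by (simp add: coupling_def)
    ultimately show ?thesis
      by linarith
  qed
  then have "coupling m1 m2 (\<lambda>y a. g y a + (- \<tau>) * cycle_plan xs y a)"
    using g zero_marginals_cycle_plan by (intro coupling_add_zero_marginals) auto
  with \<open>0 < \<tau>\<close> show thesis
    using that by simp
qed

lemma strictly_cm_support_if_unique_optimal:
  fixes g0 u :: "'y::finite \<Rightarrow> 'a::finite \<Rightarrow> real"
  assumes g0: "coupling m1 m2 g0"
    and unique: "\<forall>g. coupling m1 m2 g \<and> g \<noteq> g0 \<longrightarrow> pairing g u < pairing g0 u"
  shows "strictly_cm (supp1 g0) u"
  unfolding strictly_cm_def
proof (intro allI impI, elim conjE)
  fix xs
  assume "xs \<noteq> []" "set xs \<subseteq> supp1 g0" "set xs \<noteq> set (shift_pairs xs)"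
  then obtain \<tau> where "0 < \<tau>" and coupled: "coupling m1 m2 (\<lambda>y a. g0 y a - \<tau> * cycle_plan xs y a)"
    using coupling_minus_cycle_plan[OF g0] by blast
  obtain y a where "cycle_plan xs y a \<noteq> 0"
    using supp1_cycle_plan_nonempty[OF \<open>set xs \<noteq> set (shift_pairs xs)\<close>] by (auto simp: supp1_def)
  then have "(\<lambda>y a. g0 y a - \<tau> * cycle_plan xs y a) \<noteq> g0"
    using \<open>0 < \<tau>\<close> by (auto simp: fun_eq_iff)
  then have "pairing (\<lambda>y a. g0 y a - \<tau> * cycle_plan xs y a) u < pairing g0 u"
    using unique coupled by blast
  then have "0 < pairing (cycle_plan xs) u"
    using pairing_add_scaled_left[of g0 "- \<tau>" "cycle_plan xs" u] \<open>0 < \<tau>\<close>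
    by (simp add: zero_less_mult_iff)
  then show "(\<Sum>p\<leftarrow>shift_pairs xs. u (fst p) (snd p)) < (\<Sum>p\<leftarrow>xs. u (fst p) (snd p))"
    by (simp add: pairing_cycle_plan)
qed

lemma pairing_lt_if_strictly_cm_support:
  fixes g g0 u :: "'y::finite \<Rightarrow> 'a::finite \<Rightarrow> real"
  assumes cm: "strictly_cm (supp1 g0) u" and g0: "coupling m1 m2 g0" and g: "coupling m1 m2 g"
    and "g \<noteq> g0"
  shows "pairing g u < pairing g0 u"
proof -
  have "(y, a) \<in> supp1 g0" if "g y a - g0 y a < 0" for y a
  proof -
    have "0 \<le> g y a"
      using g by (simp add: coupling_def)
    with that show ?thesis
      by (auto simp: supp1_def)
  qed
  moreover have "supp1 (\<lambda>y a. g y a - g0 y a) \<noteq> {}"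
    using \<open>g \<noteq> g0\<close> by (auto simp: supp1_def fun_eq_iff)
  ultimately have "pairing (\<lambda>y a. g y a - g0 y a) u < 0"
    using pairing_neg_if_strictly_cm[OF cm zero_marginals_diff_couplings[OF g g0]] by blast
  then show ?thesis
    by (simp add: pairing_diff_left)
qed

lemma unique_optimal_coupling_iff_strictly_cm:
  fixes g0 u :: "'y::finite \<Rightarrow> 'a::finite \<Rightarrow> real"
  assumes "coupling m1 m2 g0"
  shows "(\<forall>g. coupling m1 m2 g \<and> g \<noteq> g0 \<longrightarrow> pairing g u < pairing g0 u)
    \<longleftrightarrow> strictly_cm (supp1 g0) u"
  using assms strictly_cm_support_if_unique_optimal pairing_lt_if_strictly_cm_support by blast

lemma rho_marg_pos:
  assumes "is_dist \<alpha>0" and "\<forall>a0 y0. 0 < rho0 a0 y0"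
  shows "0 < rho_marg rho0 \<alpha>0 y"
proof -
  obtain a where "0 < \<alpha>0 a"
    using assms(1) sum_nonneg_eq_0_iff[of UNIV \<alpha>0] by (force simp: is_dist_def less_le)
  then show ?thesis
    unfolding rho_marg_def using assms by (intro sum_pos2[of UNIV a]) (auto simp: is_dist_def less_imp_le)
qed

lemma gam_eq_rho_marg: "gam rho0 \<alpha>0 s y a = rho_marg rho0 \<alpha>0 y * s y a"
  by (simp add: gam_def rho_marg_def sum_distrib_right)

lemma supp1_gam:
  assumes "\<And>y. 0 < rho_marg rho0 \<alpha>0 y"
  shows "supp1 (gam rho0 \<alpha>0 s) = supp1 s"
  using assms[THEN less_imp_neq, THEN not_sym] by (simp add: supp1_def gam_eq_rho_marg)

lemma coupling_gam:
  assumes "is_strat s" "is_dist \<alpha>0" "\<forall>a0. is_dist (rho0 a0)"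
  shows "coupling (rho_marg rho0 \<alpha>0) (phi rho0 \<alpha>0 s) (gam rho0 \<alpha>0 s)"
proof -
  have rows: "(\<Sum>a\<in>UNIV. gam rho0 \<alpha>0 s y a) = rho_marg rho0 \<alpha>0 y" for y
    using assms(1) by (simp add: gam_eq_rho_marg is_strat_def is_dist_def flip: sum_distrib_left)
  have "(\<Sum>y\<in>UNIV. rho_marg rho0 \<alpha>0 y) = (\<Sum>a0\<in>UNIV. \<alpha>0 a0 * (\<Sum>y\<in>UNIV. rho0 a0 y))"
    unfolding rho_marg_def by (subst sum.swap) (simp add: sum_distrib_left)
  also have "\<dots> = 1"
    using assms(2,3) by (simp add: is_dist_def)
  finally have "(\<Sum>y\<in>UNIV. \<Sum>a\<in>UNIV. gam rho0 \<alpha>0 s y a) = 1"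
    by (simp add: rows)
  moreover have "0 \<le> gam rho0 \<alpha>0 s y a" for y a
    using assms by (auto simp: gam_def is_strat_def is_dist_def intro!: sum_nonneg)
  ultimately show ?thesis
    by (simp add: coupling_def rows phi_def)
qed

lemma strategy_of_coupling:
  assumes pos: "\<And>y. 0 < rho_marg rho0 \<alpha>0 y" and g: "coupling (rho_marg rho0 \<alpha>0) m2 g"
  obtains s where "is_strat s" "gam rho0 \<alpha>0 s = g"
proof
  let ?s = "\<lambda>y a. g y a / rho_marg rho0 \<alpha>0 y"
  have "0 \<le> ?s y a" for y a
    using g pos[of y] by (simp add: coupling_def)
  moreover have "(\<Sum>a\<in>UNIV. ?s y a) = 1" for y
    using g pos[of y] by (simp add: coupling_def flip: sum_divide_distrib)
  ultimately show "is_strat ?s"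
    by (simp add: is_strat_def is_dist_def)
  show "gam rho0 \<alpha>0 ?s = g"
    using pos[THEN less_imp_neq, THEN not_sym] by (simp add: fun_eq_iff gam_eq_rho_marg)
qed

lemma Ui_eq_pairing: "Ui rho0 u \<alpha>0 s \<alpha>2 = pairing (gam rho0 \<alpha>0 s) (umix u \<alpha>2)"
  unfolding Ui_def umix_def pairing_def sum_distrib_left by (intro sum.cong refl) (simp add: mult_ac)

lemma pdist_eq_phi:
  "pdist rho0 rho1 \<alpha>0 s \<alpha>2 y1 = (\<Sum>a\<in>UNIV. phi rho0 \<alpha>0 s a * (\<Sum>a2\<in>UNIV. \<alpha>2 a2 * rho1 a a2 y1))"
proof -
  have "pdist rho0 rho1 \<alpha>0 s \<alpha>2 y1
      = (\<Sum>y\<in>UNIV. \<Sum>a\<in>UNIV. gam rho0 \<alpha>0 s y a * (\<Sum>a2\<in>UNIV. \<alpha>2 a2 * rho1 a a2 y1))"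
    unfolding pdist_def sum_distrib_left by (intro sum.cong refl) (simp add: mult_ac)
  also have "\<dots> = (\<Sum>a\<in>UNIV. phi rho0 \<alpha>0 s a * (\<Sum>a2\<in>UNIV. \<alpha>2 a2 * rho1 a a2 y1))"
    unfolding phi_def by (subst sum.swap) (simp add: sum_distrib_right)
  finally show ?thesis .
qed

lemma BReta_imp_dist: "(\<alpha>0, \<alpha>2) \<in> BReta rho0 rho1 u0 u2 \<eta> s \<Longrightarrow> is_dist \<alpha>0 \<and> is_dist \<alpha>2"
  by (auto simp: BReta_def BR_def)

lemma CD2_iff_strictly_cm:
  assumes "\<forall>a0. is_dist (rho0 a0)" "\<forall>a0 y0. 0 < rho0 a0 y0" "is_strat s"
  shows "CD2 rho0 rho1 u0 u1 u2 s
    \<longleftrightarrow> (\<forall>(\<alpha>0, \<alpha>2) \<in> BReta rho0 rho1 u0 u2 0 s. strictly_cm (supp1 s) (umix u1 \<alpha>2))"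
proof -
  have "coupling (rho_marg rho0 \<alpha>0) (phi rho0 \<alpha>0 s) (gam rho0 \<alpha>0 s)
      \<and> (\<forall>g. coupling (rho_marg rho0 \<alpha>0) (phi rho0 \<alpha>0 s) g \<and> g \<noteq> gam rho0 \<alpha>0 s
             \<longrightarrow> pairing g (umix u1 \<alpha>2) < pairing (gam rho0 \<alpha>0 s) (umix u1 \<alpha>2))
    \<longleftrightarrow> strictly_cm (supp1 s) (umix u1 \<alpha>2)"
    if "(\<alpha>0, \<alpha>2) \<in> BReta rho0 rho1 u0 u2 0 s" for \<alpha>0 \<alpha>2
  proof -
    have "is_dist \<alpha>0"
      using BReta_imp_dist[OF that] ..
    then have "coupling (rho_marg rho0 \<alpha>0) (phi rho0 \<alpha>0 s) (gam rho0 \<alpha>0 s)"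
      "supp1 (gam rho0 \<alpha>0 s) = supp1 s"
      using assms coupling_gam supp1_gam rho_marg_pos by blast+
    then show ?thesis
      using unique_optimal_coupling_iff_strictly_cm by metis
  qed
  then show ?thesis
    unfolding CD2_def Let_def pairing_def by fast
qed

lemma Ui_attains_max_on_pdist_fiber:
  fixes s :: "'y0::finite \<Rightarrow> 'a1::finite \<Rightarrow> real"
  assumes "is_strat s"
  obtains sm where "is_strat sm" "pdist rho0 rho1 \<alpha>0 sm \<alpha>2 = pdist rho0 rho1 \<alpha>0 s \<alpha>2"
    "\<And>t. is_strat t \<Longrightarrow> pdist rho0 rho1 \<alpha>0 t \<alpha>2 = pdist rho0 rho1 \<alpha>0 s \<alpha>2
      \<Longrightarrow> Ui rho0 u \<alpha>0 t \<alpha>2 \<le> Ui rho0 u \<alpha>0 sm \<alpha>2"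
proof -
  define strat_of :: "real^('y0 \<times> 'a1) \<Rightarrow> 'y0 \<Rightarrow> 'a1 \<Rightarrow> real"
    where "strat_of v = (\<lambda>y a. v $ (y, a))" for v
  define vec_of :: "('y0 \<Rightarrow> 'a1 \<Rightarrow> real) \<Rightarrow> real^('y0 \<times> 'a1)"
    where "vec_of t = (\<chi> p. t (fst p) (snd p))" for t
  have strat_of_vec_of [simp]: "strat_of (vec_of t) = t" for t
    by (simp add: strat_of_def vec_of_def)
  define K where "K = {v. is_strat (strat_of v)
    \<and> pdist rho0 rho1 \<alpha>0 (strat_of v) \<alpha>2 = pdist rho0 rho1 \<alpha>0 s \<alpha>2}"
  have "closed K"
    unfolding K_def is_strat_def is_dist_def fun_eq_iff pdist_def gam_def strat_of_def
    by (intro closed_Collect_conj closed_Collect_all closed_Collect_le closed_Collect_eq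
        continuous_intros)
  moreover have "K \<subseteq> cbox 0 1"
  proof
    fix v
    assume "v \<in> K"
    then have "is_strat (strat_of v)"
      by (simp add: K_def)
    then have "0 \<le> v $ (y, a) \<and> v $ (y, a) \<le> 1" for y a
      using member_le_sum[of a UNIV "\<lambda>a. v $ (y, a)"]
      by (auto simp: is_strat_def is_dist_def strat_of_def)
    then show "v \<in> cbox 0 1"
      by (auto simp: mem_box_cart)
  qed
  ultimately have "compact K"
    using bounded_cbox bounded_subset compact_eq_bounded_closed by blast
  moreover have "vec_of s \<in> K"
    using assms by (simp add: K_def)
  moreover have "continuous_on K (\<lambda>v. Ui rho0 u \<alpha>0 (strat_of v) \<alpha>2)"
    unfolding Ui_def gam_def strat_of_def by (intro continuous_intros)
  ultimately obtain vm where "vm \<in> K"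
    and vm_max: "\<forall>v\<in>K. Ui rho0 u \<alpha>0 (strat_of v) \<alpha>2 \<le> Ui rho0 u \<alpha>0 (strat_of vm) \<alpha>2"
    using continuous_attains_sup[of K] by blast
  show thesis
  proof (rule that)
    show "is_strat (strat_of vm)" "pdist rho0 rho1 \<alpha>0 (strat_of vm) \<alpha>2 = pdist rho0 rho1 \<alpha>0 s \<alpha>2"
      using \<open>vm \<in> K\<close> by (simp_all add: K_def)
    fix t
    assume "is_strat t" "pdist rho0 rho1 \<alpha>0 t \<alpha>2 = pdist rho0 rho1 \<alpha>0 s \<alpha>2"
    then show "Ui rho0 u \<alpha>0 t \<alpha>2 \<le> Ui rho0 u \<alpha>0 (strat_of vm) \<alpha>2"
      using vm_max[rule_format, of "vec_of t"] by (simp add: K_def)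
  qed
qed

lemma supn_zero [simp]: "supn (\<lambda>x. 0) = 0"
  by (simp add: supn_def)

lemma supn2_pos: "f y a \<noteq> 0 \<Longrightarrow> 0 < supn2 f"
  using Max_ge[of "range (\<lambda>(y, a). \<bar>f y a\<bar>)" "\<bar>f y a\<bar>"]
  by (fastforce simp: supn2_def)

lemma BReta_mono: "0 \<le> \<eta> \<Longrightarrow> BReta rho0 rho1 u0 u2 0 s \<subseteq> BReta rho0 rho1 u0 u2 \<eta> s"
  by (auto simp: BReta_def)

lemma CD1_fiber_maximizer_unique:
  assumes cd1: "CD1 rho0 rho1 u0 u1 u2 s" and B0: "(\<alpha>0, \<alpha>2) \<in> BReta rho0 rho1 u0 u2 0 s"
    and "is_strat s'" and same_p: "pdist rho0 rho1 \<alpha>0 s' \<alpha>2 = pdist rho0 rho1 \<alpha>0 s \<alpha>2"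
    and s'_max: "\<And>t. is_strat t \<Longrightarrow> pdist rho0 rho1 \<alpha>0 t \<alpha>2 = pdist rho0 rho1 \<alpha>0 s \<alpha>2
      \<Longrightarrow> Ui rho0 u1 \<alpha>0 t \<alpha>2 \<le> Ui rho0 u1 \<alpha>0 s' \<alpha>2"
  shows "s' = s"
proof (rule ccontr)
  assume "s' \<noteq> s"
  then obtain y a where "s' y a - s y a \<noteq> 0"
    by (auto simp: fun_eq_iff)
  then have dist_pos: "0 < supn2 (\<lambda>y a. s' y a - s y a)"
    by (rule supn2_pos)
  define \<epsilon> where "\<epsilon> = supn2 (\<lambda>y a. s' y a - s y a) / 2"
  have "0 < \<epsilon>" "\<epsilon> < supn2 (\<lambda>y a. s' y a - s y a)"
    using dist_pos by (simp_all add: \<epsilon>_def)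
  then obtain \<eta> where "0 < \<eta>" and improve: "\<forall>(\<beta>0, \<beta>2) \<in> BReta rho0 rho1 u0 u2 \<eta> s. \<forall>r.
      is_strat r \<and> supn2 (\<lambda>y a. r y a - s y a) > \<epsilon> \<and>
      supn (\<lambda>y1. pdist rho0 rho1 \<beta>0 r \<beta>2 y1 - pdist rho0 rho1 \<beta>0 s \<beta>2 y1) < \<eta> \<longrightarrow>
      (\<exists>st. is_strat st \<and> pdist rho0 rho1 \<beta>0 st \<beta>2 = pdist rho0 rho1 \<beta>0 r \<beta>2 \<and>
            Ui rho0 u1 \<beta>0 st \<beta>2 > Ui rho0 u1 \<beta>0 r \<beta>2)"
    using cd1 unfolding CD1_def by blast
  have "(\<alpha>0, \<alpha>2) \<in> BReta rho0 rho1 u0 u2 \<eta> s"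
    using subsetD[OF BReta_mono B0] \<open>0 < \<eta>\<close> by simp
  then obtain st where "is_strat st" "pdist rho0 rho1 \<alpha>0 st \<alpha>2 = pdist rho0 rho1 \<alpha>0 s' \<alpha>2"
    "Ui rho0 u1 \<alpha>0 st \<alpha>2 > Ui rho0 u1 \<alpha>0 s' \<alpha>2"
    using bspec[OF improve] \<open>is_strat s'\<close> \<open>\<epsilon> < supn2 _\<close> same_p \<open>0 < \<eta>\<close> by fastforce
  then show False
    using s'_max same_p by (metis not_le)
qed

lemma CD1_imp_unique_best_on_pdist_fiber:
  assumes cd1: "CD1 rho0 rho1 u0 u1 u2 s" and B0: "(\<alpha>0, \<alpha>2) \<in> BReta rho0 rho1 u0 u2 0 s"
    and "is_strat s" "is_strat t" and same_p: "pdist rho0 rho1 \<alpha>0 t \<alpha>2 = pdist rho0 rho1 \<alpha>0 s \<alpha>2"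
    and "t \<noteq> s"
  shows "Ui rho0 u1 \<alpha>0 t \<alpha>2 < Ui rho0 u1 \<alpha>0 s \<alpha>2"
proof (rule ccontr)
  assume "\<not> ?thesis"
  then have t_ge: "Ui rho0 u1 \<alpha>0 s \<alpha>2 \<le> Ui rho0 u1 \<alpha>0 t \<alpha>2"
    by simp
  obtain sm where "is_strat sm" "pdist rho0 rho1 \<alpha>0 sm \<alpha>2 = pdist rho0 rho1 \<alpha>0 s \<alpha>2"
    and sm_max: "\<And>r. is_strat r \<Longrightarrow> pdist rho0 rho1 \<alpha>0 r \<alpha>2 = pdist rho0 rho1 \<alpha>0 s \<alpha>2
      \<Longrightarrow> Ui rho0 u1 \<alpha>0 r \<alpha>2 \<le> Ui rho0 u1 \<alpha>0 sm \<alpha>2"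
    using Ui_attains_max_on_pdist_fiber[OF \<open>is_strat s\<close>] by blast
  then have "sm = s"
    using CD1_fiber_maximizer_unique[OF cd1 B0] by blast
  then have "Ui rho0 u1 \<alpha>0 r \<alpha>2 \<le> Ui rho0 u1 \<alpha>0 t \<alpha>2"
    if "is_strat r" "pdist rho0 rho1 \<alpha>0 r \<alpha>2 = pdist rho0 rho1 \<alpha>0 s \<alpha>2" for r
    using sm_max[OF that] t_ge by simp
  then have "t = s"
    using CD1_fiber_maximizer_unique[OF cd1 B0 \<open>is_strat t\<close> same_p] by blast
  with \<open>t \<noteq> s\<close> show False ..
qed

lemma CD2_if_CD1:
  assumes rho0: "\<forall>a0. is_dist (rho0 a0)" "\<forall>a0 y0. 0 < rho0 a0 y0" and "is_strat s"
    and cd1: "CD1 rho0 rho1 u0 u1 u2 s"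
  shows "CD2 rho0 rho1 u0 u1 u2 s"
  unfolding CD2_iff_strictly_cm[OF rho0 \<open>is_strat s\<close>]
proof (intro ballI, clarify)
  fix \<alpha>0 \<alpha>2
  assume B0: "(\<alpha>0, \<alpha>2) \<in> BReta rho0 rho1 u0 u2 0 s"
  then have "is_dist \<alpha>0"
    by (simp add: BReta_imp_dist)
  then have pos: "0 < rho_marg rho0 \<alpha>0 y" for y
    using rho0 rho_marg_pos by blast
  have "\<forall>g. coupling (rho_marg rho0 \<alpha>0) (phi rho0 \<alpha>0 s) g \<and> g \<noteq> gam rho0 \<alpha>0 s
      \<longrightarrow> pairing g (umix u1 \<alpha>2) < pairing (gam rho0 \<alpha>0 s) (umix u1 \<alpha>2)"
  proof (intro allI impI, elim conjE)
    fix g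
    assume g: "coupling (rho_marg rho0 \<alpha>0) (phi rho0 \<alpha>0 s) g" and "g \<noteq> gam rho0 \<alpha>0 s"
    obtain t where "is_strat t" and gam_t: "gam rho0 \<alpha>0 t = g"
      using strategy_of_coupling[OF pos g] .
    have "phi rho0 \<alpha>0 t = phi rho0 \<alpha>0 s"
      using g gam_t by (auto simp: phi_def coupling_def)
    then have "pdist rho0 rho1 \<alpha>0 t \<alpha>2 = pdist rho0 rho1 \<alpha>0 s \<alpha>2"
      by (simp add: fun_eq_iff pdist_eq_phi)
    moreover have "t \<noteq> s"
      using gam_t \<open>g \<noteq> gam rho0 \<alpha>0 s\<close> by blast
    ultimately have "Ui rho0 u1 \<alpha>0 t \<alpha>2 < Ui rho0 u1 \<alpha>0 s \<alpha>2"
      using CD1_imp_unique_best_on_pdist_fiber[OF cd1 B0 \<open>is_strat s\<close> \<open>is_strat t\<close>] by blast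
    then show "pairing g (umix u1 \<alpha>2) < pairing (gam rho0 \<alpha>0 s) (umix u1 \<alpha>2)"
      by (simp add: Ui_eq_pairing gam_t)
  qed
  then have "strictly_cm (supp1 (gam rho0 \<alpha>0 s)) (umix u1 \<alpha>2)"
    using coupling_gam[OF \<open>is_strat s\<close> \<open>is_dist \<alpha>0\<close> rho0(1)] unique_optimal_coupling_iff_strictly_cm
    by blast
  then show "strictly_cm (supp1 s) (umix u1 \<alpha>2)"
    by (simp add: supp1_gam[OF pos])
qed

lemma confound_defeating_iff_CD2:
  assumes "\<forall>a0. is_dist (rho0 a0)" "\<forall>a0 y0. 0 < rho0 a0 y0" "is_strat s"
  shows "confound_defeating rho0 rho1 u0 u1 u2 s \<longleftrightarrow> CD2 rho0 rho1 u0 u1 u2 s"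
  using CD2_if_CD1[OF assms] by (auto simp: confound_defeating_def)

lemma ex_maximizer: "\<exists>a. \<forall>b. (f :: 'b::finite \<Rightarrow> real) b \<le> f a"
proof -
  have "Max (range f) \<in> range f"
    by (rule Max_in) auto
  then obtain a where "f a = Max (range f)"
    by (metis imageE)
  then have "\<forall>b. f b \<le> f a"
    using Max_ge[of "range f"] by simp
  then show ?thesis
    by blast
qed

lemma BReta_zero_nonempty:
  assumes "is_strat s"
  shows "BReta rho0 rho1 u0 u2 0 s \<noteq> {}"
proof -
  obtain a0 where a0: "\<forall>b. U0 rho0 u0 b s \<le> U0 rho0 u0 a0 s"
    using ex_maximizer[of "\<lambda>b. U0 rho0 u0 b s"] by blast
  define \<alpha>0 where "\<alpha>0 = (\<lambda>x. if x = a0 then 1 else (0::real))"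
  obtain a2 where a2: "\<forall>b. Ui rho0 u2 \<alpha>0 s (\<lambda>x. if x = b then 1 else 0)
      \<le> Ui rho0 u2 \<alpha>0 s (\<lambda>x. if x = a2 then 1 else 0)"
    using ex_maximizer[of "\<lambda>b. Ui rho0 u2 \<alpha>0 s (\<lambda>x. if x = b then 1 else 0)"] by blast
  have "(\<alpha>0, \<lambda>x. if x = a2 then 1 else 0) \<in> BR rho0 u0 u2 s"
    using a0 a2 by (simp add: BR_def \<alpha>0_def is_dist_def)
  then have "(\<alpha>0, \<lambda>x. if x = a2 then 1 else 0) \<in> BReta rho0 rho1 u0 u2 0 s"
    using assms by (auto simp: BReta_def)
  then show ?thesis
    by blast
qed

lemma strictly_u1_cm_iff_forall:
  assumes "strictly_cyc_separable u1" "B \<noteq> {}" "\<forall>(\<alpha>0, \<alpha>2) \<in> B. is_dist \<alpha>2"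
  shows "(\<forall>(\<alpha>0, \<alpha>2) \<in> B. strictly_cm S (umix u1 \<alpha>2)) \<longleftrightarrow> strictly_u1_cm u1 S"
proof
  assume "\<forall>(\<alpha>0, \<alpha>2) \<in> B. strictly_cm S (umix u1 \<alpha>2)"
  moreover obtain \<alpha>0 \<alpha>2 where "(\<alpha>0, \<alpha>2) \<in> B"
    using \<open>B \<noteq> {}\<close> by auto
  ultimately show "strictly_u1_cm u1 S"
    using assms(3) unfolding strictly_u1_cm_def by blast
next
  assume "strictly_u1_cm u1 S"
  then have "\<forall>\<alpha>2. is_dist \<alpha>2 \<longrightarrow> strictly_cm S (umix u1 \<alpha>2)"
    using assms(1) unfolding strictly_u1_cm_def strictly_cyc_separable_def by blast
  then show "\<forall>(\<alpha>0, \<alpha>2) \<in> B. strictly_cm S (umix u1 \<alpha>2)"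
    using assms(3) by blast
qed

theorem corollary1:
  fixes rho0 :: "'a0::finite \<Rightarrow> 'y0::finite \<Rightarrow> real"
    and rho1 :: "'a1::finite \<Rightarrow> 'a2::finite \<Rightarrow> 'y1::finite \<Rightarrow> real"
    and u0 :: "'a0 \<Rightarrow> 'a1 \<Rightarrow> real"
    and u1 u2 :: "'y0 \<Rightarrow> 'a1 \<Rightarrow> 'a2 \<Rightarrow> real"
    and s :: "'y0 \<Rightarrow> 'a1 \<Rightarrow> real"
  assumes rho0_dist: "\<forall>a0. is_dist (rho0 a0)"
    and rho1_dist: "\<forall>a1 a2. is_dist (rho1 a1 a2)"
    and full_support: "\<forall>a0 y0. rho0 a0 y0 > 0"
    and supp_indep: "\<forall>y1 a1 a2 a2'. rho1 a1 a2 y1 > 0 \<longrightarrow> rho1 a1 a2' y1 > 0"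
    and lin_indep: "\<forall>a2 c. (\<forall>y1. (\<Sum>a1\<in>UNIV. c a1 * rho1 a1 a2 y1) = 0) \<longrightarrow> (\<forall>a1. c a1 = 0)"
    and s_strat: "is_strat s"
  shows "(confound_defeating rho0 rho1 u0 u1 u2 s \<longleftrightarrow>
           (\<forall>(\<alpha>0, \<alpha>2) \<in> BReta rho0 rho1 u0 u2 0 s. strictly_cm (supp1 s) (umix u1 \<alpha>2)))
       \<and> (strictly_cyc_separable u1 \<longrightarrow>
           (confound_defeating rho0 rho1 u0 u1 u2 s \<longleftrightarrow> strictly_u1_cm u1 (supp1 s)))"
proof -
  have "confound_defeating rho0 rho1 u0 u1 u2 s \<longleftrightarrow> CD2 rho0 rho1 u0 u1 u2 s"
    by (rule confound_defeating_iff_CD2[OF rho0_dist full_support s_strat])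
  also have "\<dots> \<longleftrightarrow> (\<forall>(\<alpha>0, \<alpha>2) \<in> BReta rho0 rho1 u0 u2 0 s. strictly_cm (supp1 s) (umix u1 \<alpha>2))"
    by (rule CD2_iff_strictly_cm[OF rho0_dist full_support s_strat])
  finally have cd_iff: "confound_defeating rho0 rho1 u0 u1 u2 s
      \<longleftrightarrow> (\<forall>(\<alpha>0, \<alpha>2) \<in> BReta rho0 rho1 u0 u2 0 s. strictly_cm (supp1 s) (umix u1 \<alpha>2))" .
  have "\<forall>(\<alpha>0, \<alpha>2) \<in> BReta rho0 rho1 u0 u2 0 s. is_dist \<alpha>2"
    using BReta_imp_dist by blast
  then show ?thesis
    using cd_iff strictly_u1_cm_iff_forall[OF _ BReta_zero_nonempty[OF s_strat]] by blast
qed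

end
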